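(* Let $F\subset\mathbb G^d$ be a nonempty closed set and $\tau=\tau_F$ the associated quasimeasure, with generating series $\sum_{\mathbf n}\widehat\tau_{\mathbf n}W_{\mathbf n}$ and partial sums $S_{\mathbf N}$. Then for every $\mathbf g\notin F$ there is $w=w(\mathbf g)\in\mathbb N_0$ such that $S_{2^w\mathbf M}(\mathbf g)=0$ for all $\mathbf M\in\mathbb N^d$.
   Context: Fix $d\ge2$. $\mathbb G$ is the dyadic group: sequences $g=(g_k)_{k\ge0}$, $g_k\in\{0,1\}$, coordinatewise addition mod 2, product topology; $\mathbb G^d$ its $d$-th power. For $n\in\mathbb N_0$, $n=\sum_kn_k2^k$, $n_k\in\{0,1\}$. Dyadic interval of rank $k$: $\Delta^{(k)}_m=\{g: g_t=m_{k-1-t},\ 0\le t<k\}$; dyadic cube $\Delta^{(k)}_{\mathbf m}=\prod_l\Delta^{(k)}_{m^l}$. Vector order coordinatewise, $\mathbf 1=(1,\dots,1)$. Walsh functions $W_n(g)=\prod_k(-1)^{g_kn_k}$, $W_{\mathbf n}(\mathbf g)=\prod_lW_{n^l}(g^l)$; $W^{(k)}_{\mathbf n\mathbf m}$ is the constant value of $W_{\mathbf n}$ on $\Delta^{(k)}_{\mathbf m}$ ($\mathbf n,\mathbf m<2^k\mathbf 1$). Partial sums $S_{\mathbf N}=\sum_{\mathbf n<\mathbf N}a_{\mathbf n}W_{\mathbf n}$. Quasimeasure: $\tau$ on dyadic cubes with $\tau(\Delta^{(k)}_{\mathbf m})=\sum_{\boldsymbol\sigma\in\{0,1\}^d}\tau(\Delta^{(k+1)}_{2\mathbf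 m+\boldsymbol\sigma})$; Fourier–Walsh coefficients $\widehat\tau_{\mathbf n}=\sum_{\mathbf m<2^k\mathbf 1}W^{(k)}_{\mathbf n\mathbf m}\tau(\Delta^{(k)}_{\mathbf m})$ ($\mathbf n<2^k\mathbf 1$); the series generating $\tau$ is $\sum\widehat\tau_{\mathbf n}W_{\mathbf n}$. $\tau_F$ is the unique nonnegative quasimeasure with $\tau_F(\mathbb G^d)=1$, $\tau_F(\Delta)=0$ iff $\Delta\cap F=\emptyset$, and such that if $\Delta^{(k)}_{\mathbf m}$ meets $F$ and exactly $M$ of its $2^d$ children $\Delta^{(k+1)}_{2\mathbf m+\boldsymbol\sigma}$ meet $F$, each of those has value $\tau_F(\Delta^{(k)}_{\mathbf m})/M$ and the others $0$. *)

theory Defs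
  imports "HOL-Analysis.Analysis"
begin

text \<open>The dyadic group: sequences of binary digits, as nat \<Rightarrow> bool (True = 1).
  A point of G^d is a function from a finite index type 'd (with CARD('d) = d)
  into the dyadic group.\<close>

type_synonym dyadic = "nat \<Rightarrow> bool"

definition dyadic_topology :: "('d \<Rightarrow> dyadic) topology" where
  "dyadic_topology = product_topology
     (\<lambda>_. product_topology (\<lambda>_. discrete_topology (UNIV :: bool set)) UNIV) UNIV"

definition dyadic_interval :: "nat \<Rightarrow> nat \<Rightarrow> dyadic set" where
  "dyadic_interval k m = {g. \<forall>t<k. g t = bit m (k - 1 - t)}"

definition dyadic_cube :: "nat \<Rightarrow> ('d \<Rightarrow> nat) \<Rightarrow> ('d \<Rightarrow> dyadic) set" where
  "dyadic_cube k m = {g. \<forall>l. g l \<in> dyadic_interval k (m l)}"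

text \<open>Walsh functions. Only digits k < n of n can be nonzero.\<close>
definition walsh :: "nat \<Rightarrow> dyadic \<Rightarrow> real" where
  "walsh n g = (\<Prod>k<n. if bit n k \<and> g k then -1 else 1)"

definition walsh_vec :: "('d::finite \<Rightarrow> nat) \<Rightarrow> ('d \<Rightarrow> dyadic) \<Rightarrow> real" where
  "walsh_vec n g = (\<Prod>l\<in>UNIV. walsh (n l) (g l))"

definition cube_point :: "nat \<Rightarrow> ('d \<Rightarrow> nat) \<Rightarrow> ('d \<Rightarrow> dyadic)" where
  "cube_point k m = (\<lambda>l t. t < k \<and> bit (m l) (k - 1 - t))"

text \<open>W^{(k)}_{n m}: the (constant) value of W_n on the cube of rank k with index m.\<close>
definition walsh_cube :: "nat \<Rightarrow> ('d::finite \<Rightarrow> nat) \<Rightarrow> ('d \<Rightarrow> nat) \<Rightarrow> real" where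
  "walsh_cube k n m = walsh_vec n (cube_point k m)"

text \<open>Children of a cube: indices 2m + sigma, sigma in {0,1}^d.\<close>
definition child_signs :: "('d \<Rightarrow> nat) set" where
  "child_signs = {\<sigma>. \<forall>l. \<sigma> l \<le> 1}"

text \<open>The quasimeasure tau_F on dyadic cubes, by the splitting rule of the paper:
  the whole space gets 1; a cube meeting F passes its mass equally to those of its
  2^d children that meet F; cubes not meeting F get 0.\<close>
fun tauF :: "('d::finite \<Rightarrow> dyadic) set \<Rightarrow> nat \<Rightarrow> ('d \<Rightarrow> nat) \<Rightarrow> real" where
  "tauF F 0 m = (if dyadic_cube 0 m \<inter> F = {} then 0 else 1)"
| "tauF F (Suc k) m =
     (if dyadic_cube (Suc k) m \<inter> F = {} then 0
      else tauF F k (\<lambda>l. m l div 2) /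
        real (card {\<sigma> \<in> child_signs.
           dyadic_cube (Suc k) (\<lambda>l. 2 * (m l div 2) + \<sigma> l) \<inter> F \<noteq> {}}))"

text \<open>Fourier--Walsh coefficients of a quasimeasure tau, computed at rank
  k = max_l n_l (which satisfies n < 2^k 1); the value does not depend on the
  admissible rank for a quasimeasure.\<close>
definition fw_coeff :: "(nat \<Rightarrow> ('d::finite \<Rightarrow> nat) \<Rightarrow> real) \<Rightarrow> ('d \<Rightarrow> nat) \<Rightarrow> real" where
  "fw_coeff \<tau> n = (let k = Max (range n) in
     (\<Sum>m\<in>{m. \<forall>l. m l < 2 ^ k}. walsh_cube k n m * \<tau> k m))"

definition partial_sum :: "(('d::finite \<Rightarrow> nat) \<Rightarrow> real) \<Rightarrow> ('d \<Rightarrow> nat) \<Rightarrow> ('d \<Rightarrow> dyadic) \<Rightarrow> real" where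
  "partial_sum a N g = (\<Sum>n\<in>{n. \<forall>l. n l < N l}. a n * walsh_vec n g)"

end

theory Submission
  imports Defs
begin

text \<open>
  Since F is closed and g \<notin> F, some cylinder {h. h l t = g l t for all l and t < w}
  misses F. For a quasimeasure tau the Fourier--Walsh coefficients can be computed at
  any rank K \<ge> max n, which turns S_N(g) into the sum over cubes of rank K of
  tau(cube) * D_N(x, g), with x a point of the cube and D_N(x, g) the sum of
  W_n(x) W_n(g) over n < N. If 2^w divides every N_l and x, g differ in a digit t < w
  of the l-th coordinate, then flipping bit t of n_l is a sign-reversing involution of
  the box n < N, so D_N(x, g) = 0. The remaining cubes lie in the cylinder and have
  tau_F-mass 0.
\<close>

lemma openin_cantor_space_cylinder:
  fixes U :: "(nat \<Rightarrow> 'a) set"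
  assumes "openin (product_topology (\<lambda>_. discrete_topology UNIV) UNIV) U" and "x \<in> U"
  shows "\<exists>w. \<forall>y. (\<forall>t<w. y t = x t) \<longrightarrow> y \<in> U"
proof -
  obtain V where V: "finite {t. V t \<noteq> UNIV}" "x \<in> Pi\<^sub>E UNIV V" "Pi\<^sub>E UNIV V \<subseteq> U"
    using assms unfolding openin_product_topology_alt by force
  obtain w where w: "{t. V t \<noteq> UNIV} \<subseteq> {..<w}"
    using V(1) finite_nat_bounded by blast
  show ?thesis
  proof (intro exI allI impI)
    fix y assume y: "\<forall>t<w. y t = x t"
    have "y t \<in> V t" for t
    proof (cases "V t = UNIV")
      case False
      then have "t < w" using w by blast
      then show ?thesis using y V(2) by (auto simp: PiE_UNIV_domain)
    qed simp
    then show "y \<in> U" using V(3) by (auto simp: PiE_UNIV_domain)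
  qed
qed

lemma openin_dyadic_topology_cylinder:
  fixes U :: "('d::finite \<Rightarrow> dyadic) set"
  assumes "openin dyadic_topology U" and "g \<in> U"
  shows "\<exists>w. \<forall>h. (\<forall>l t. t < w \<longrightarrow> h l t = g l t) \<longrightarrow> h \<in> U"
proof -
  obtain V where V: "\<And>l. openin (product_topology (\<lambda>_. discrete_topology UNIV) UNIV) (V l)"
    "g \<in> Pi\<^sub>E UNIV V" "Pi\<^sub>E UNIV V \<subseteq> U"
    using assms unfolding dyadic_topology_def openin_product_topology_alt by force
  have "\<exists>w. \<forall>y. (\<forall>t<w. y t = g l t) \<longrightarrow> y \<in> V l" for l
    using V(1,2) by (intro openin_cantor_space_cylinder) (auto simp: PiE_UNIV_domain)
  then obtain w where w: "\<And>l y. (\<forall>t<w l. y t = g l t) \<Longrightarrow> y \<in> V l"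
    by metis
  show ?thesis
  proof (intro exI allI impI)
    fix h assume h: "\<forall>l t. t < Max (range w) \<longrightarrow> h l t = g l t"
    have "h l \<in> V l" for l
    proof (rule w, intro allI impI)
      fix t assume "t < w l"
      also have "w l \<le> Max (range w)"
        by simp
      finally show "h l t = g l t" using h by blast
    qed
    then show "h \<in> U" using V(3) by (auto simp: PiE_UNIV_domain)
  qed
qed

lemma closedin_dyadic_topology_cylinder_disjoint:
  fixes F :: "('d::finite \<Rightarrow> dyadic) set"
  assumes "closedin dyadic_topology F" and "g \<notin> F"
  shows "\<exists>w. \<forall>h. (\<forall>l t. t < w \<longrightarrow> h l t = g l t) \<longrightarrow> h \<notin> F"
proof -
  have "topspace (dyadic_topology :: ('d \<Rightarrow> dyadic) topology) = UNIV"
    unfolding dyadic_topology_def topspace_product_topology by (simp add: PiE_UNIV_domain)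
  then have "openin dyadic_topology (- F)"
    using assms(1) by (simp add: closedin_def Compl_eq_Diff_UNIV)
  moreover have "g \<in> - F"
    using assms(2) by simp
  ultimately have "\<exists>w. \<forall>h. (\<forall>l t. t < w \<longrightarrow> h l t = g l t) \<longrightarrow> h \<in> - F"
    by (rule openin_dyadic_topology_cylinder)
  then show ?thesis
    by simp
qed

lemma bit_less_exp_nat: "(n::nat) < 2 ^ k \<Longrightarrow> bit n j \<Longrightarrow> j < k"
  by (metis bit_take_bit_iff take_bit_nat_eq_self_iff)

lemma walsh_cong: "(\<And>k. bit n k \<Longrightarrow> y k = z k) \<Longrightarrow> walsh n y = walsh n z"
  unfolding walsh_def by (intro prod.cong) auto

lemma walsh_eq_prod_lessThan:
  assumes "\<And>k. bit n k \<Longrightarrow> k < B"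
  shows "walsh n y = (\<Prod>k<B. if bit n k \<and> y k then -1 else 1)"
proof -
  have "walsh n y = (\<Prod>k<max n B. if bit n k \<and> y k then -1 else 1)"
    unfolding walsh_def
    by (rule prod.mono_neutral_left) (auto dest: bit_less_exp_nat[OF less_exp])
  also have "\<dots> = (\<Prod>k<B. if bit n k \<and> y k then -1 else 1)"
    by (rule prod.mono_neutral_right) (auto dest: assms)
  finally show ?thesis .
qed

lemma walsh_xor_exp: "walsh (xor n (2 ^ t)) y = walsh n y * (if y t then -1 else 1)"
proof -
  define B where "B = n + t + 1"
  have bits_n: "k < B" if "bit n k" for k
    using bit_less_exp_nat[OF less_exp that] by (simp add: B_def)
  have bits_xor: "k < B" if "bit (xor n (2 ^ t)) k" for k
    using that bit_less_exp_nat[OF less_exp, of n k] by (auto simp: B_def bit_xor_iff bit_exp_iff)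
  have "walsh (xor n (2 ^ t)) y = (\<Prod>k<B. if bit (xor n (2 ^ t)) k \<and> y k then -1 else 1)"
    using bits_xor by (rule walsh_eq_prod_lessThan)
  also have "\<dots> = (\<Prod>k<B. (if bit n k \<and> y k then -1 else 1) *
                          (if k = t then if y t then -1 else 1 else (1::real)))"
    by (intro prod.cong) (auto simp: bit_xor_iff bit_exp_iff)
  also have "\<dots> = walsh n y * (if y t then -1 else 1)"
    by (simp add: prod.distrib walsh_eq_prod_lessThan[OF bits_n]) (simp add: B_def)
  finally show ?thesis .
qed

lemma walsh_vec_xor_exp:
  fixes n :: "'d::finite \<Rightarrow> nat"
  shows "walsh_vec (n(l := xor (n l) (2 ^ t))) y = walsh_vec n y * (if y l t then -1 else 1)"
proof -
  have "walsh_vec (n(l := xor (n l) (2 ^ t))) y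
      = walsh (xor (n l) (2 ^ t)) (y l) * (\<Prod>l'\<in>UNIV - {l}. walsh (n l') (y l'))"
    unfolding walsh_vec_def by (subst prod.remove[of _ l]) auto
  also have "\<dots> = walsh_vec n y * (if y l t then -1 else 1)"
    unfolding walsh_vec_def walsh_xor_exp by (subst prod.remove[of _ l]) auto
  finally show ?thesis .
qed

lemma xor_exp_less_of_dvd:
  assumes "2 ^ Suc t dvd N" and "a < N"
  shows "xor a (2 ^ t) < (N::nat)"
proof -
  obtain M where N: "N = 2 ^ Suc t * M"
    using assms(1) by blast
  have "drop_bit (Suc t) (xor a (2 ^ t)) = drop_bit (Suc t) a"
    by (simp add: drop_bit_exp_eq)
  then have "xor a (2 ^ t) div 2 ^ Suc t = a div 2 ^ Suc t"
    by (simp add: drop_bit_eq_div)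
  with assms(2) show ?thesis
    unfolding N by (simp add: div_less_iff_less_mult mult.commute flip: div_less_iff_less_mult)
qed

lemma walsh_dirichlet_kernel_eq_0:
  fixes x g :: "'d::finite \<Rightarrow> dyadic"
  assumes "2 ^ Suc t dvd N l" and "x l t \<noteq> g l t"
  shows "(\<Sum>n\<in>{n. \<forall>l. n l < N l}. walsh_vec n x * walsh_vec n g) = 0"
proof -
  let ?box = "{n. \<forall>l. n l < N l}"
  let ?flip = "\<lambda>n. n(l := xor (n l) (2 ^ t))"
  let ?f = "\<lambda>n. walsh_vec n x * walsh_vec n g"
  have "sum ?f ?box = sum (?f \<circ> ?flip) ?box"
    by (rule sum.reindex_bij_witness[where i = ?flip and j = ?flip])
      (auto simp: xor.assoc intro: xor_exp_less_of_dvd[OF assms(1)])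
  also have "\<dots> = sum (\<lambda>n. - ?f n) ?box"
    using assms(2) by (intro sum.cong) (auto simp: walsh_vec_xor_exp)
  finally show ?thesis
    by (simp add: sum_negf)
qed

lemma finite_child_signs: "finite (child_signs :: ('d::finite \<Rightarrow> nat) set)"
proof -
  have "child_signs \<subseteq> Pi\<^sub>E (UNIV :: 'd set) (\<lambda>_. {..1})"
    by (auto simp: child_signs_def PiE_UNIV_domain)
  then show ?thesis
    by (rule finite_subset) (simp add: finite_PiE)
qed

lemma child_signs_div2: "\<sigma> \<in> child_signs \<Longrightarrow> \<sigma> l div 2 = 0"
proof -
  assume "\<sigma> \<in> child_signs"
  then have "\<sigma> l \<le> 1"
    by (simp add: child_signs_def)
  then show ?thesis
    by (simp add: div_less)
qed

lemma bit_child_index_Suc: "\<sigma> \<in> child_signs \<Longrightarrow> bit (2 * a + \<sigma> l) (Suc i) = bit (a::nat) i"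
  by (simp add: bit_Suc child_signs_div2)

lemma sum_cube_indices_Suc:
  "(\<Sum>m\<in>{m::'d::finite \<Rightarrow> nat. \<forall>l. m l < 2 ^ Suc k}. f m)
     = (\<Sum>m\<in>{m. \<forall>l. m l < 2 ^ k}. \<Sum>\<sigma>\<in>child_signs. f (\<lambda>l. 2 * m l + \<sigma> l))"
proof -
  let ?parent = "\<lambda>m. (\<lambda>l. m l div 2, \<lambda>l. m l mod 2)"
  let ?child = "\<lambda>p l. 2 * fst p l + snd p l"
  have "(\<Sum>m\<in>{m. \<forall>l. m l < 2 ^ Suc k}. f m)
      = (\<Sum>p\<in>{m. \<forall>l. m l < 2 ^ k} \<times> child_signs. f (?child p))"
  proof (rule sum.reindex_bij_witness[where i = ?child and j = ?parent])
    fix m :: "'d \<Rightarrow> nat" assume "m \<in> {m. \<forall>l. m l < 2 ^ Suc k}"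
    then show "?parent m \<in> {m. \<forall>l. m l < 2 ^ k} \<times> child_signs"
      by (auto simp: child_signs_def less_mult_imp_div_less mult.commute[of _ 2])
  next
    fix p :: "('d \<Rightarrow> nat) \<times> ('d \<Rightarrow> nat)"
    assume "p \<in> {m. \<forall>l. m l < 2 ^ k} \<times> child_signs"
    then have p: "\<And>l. fst p l < 2 ^ k" "\<And>l. snd p l \<le> 1"
      by (auto simp: child_signs_def)
    have "(2 * fst p l + snd p l) div 2 = fst p l" "(2 * fst p l + snd p l) mod 2 = snd p l" for l
      using p(2)[of l] by (auto simp: le_Suc_eq)
    then show "?parent (?child p) = p"
      by (simp add: prod_eq_iff)
    have "2 * fst p l + snd p l < 2 ^ Suc k" for l
      using p(1)[of l] p(2)[of l] by simp
    then show "?child p \<in> {m. \<forall>l. m l < 2 ^ Suc k}"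
      by simp
  qed simp_all
  then show ?thesis
    by (simp add: sum.cartesian_product')
qed

lemma cube_point_child:
  assumes "\<sigma> \<in> child_signs" and "j < k"
  shows "cube_point (Suc k) (\<lambda>l. 2 * m l + \<sigma> l) l j = cube_point k m l j"
proof -
  have "Suc k - 1 - j = Suc (k - 1 - j)"
    using assms(2) by simp
  then show ?thesis
    using assms by (simp add: cube_point_def bit_child_index_Suc)
qed

lemma walsh_cube_child:
  assumes "\<forall>l. n l < 2 ^ k" and "\<sigma> \<in> child_signs"
  shows "walsh_cube (Suc k) n (\<lambda>l. 2 * m l + \<sigma> l) = walsh_cube k n m"
  unfolding walsh_cube_def walsh_vec_def
  by (intro prod.cong refl walsh_cong) (metis assms bit_less_exp_nat cube_point_child)

lemma dyadic_cube_digit: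
  "h \<in> dyadic_cube k m \<Longrightarrow> t < k \<Longrightarrow> h l t = cube_point k m l t"
  by (simp add: dyadic_cube_def dyadic_interval_def cube_point_def)

lemma dyadic_cube_children_cover:
  assumes "h \<in> dyadic_cube k m"
  shows "\<exists>\<sigma>\<in>child_signs. h \<in> dyadic_cube (Suc k) (\<lambda>l. 2 * m l + \<sigma> l)"
proof
  let ?\<sigma> = "\<lambda>l. of_bool (h l k) :: nat"
  show "?\<sigma> \<in> child_signs"
    by (simp add: child_signs_def)
  have "h l t = bit (2 * m l + ?\<sigma> l) (Suc k - 1 - t)" if "t < Suc k" for l t
  proof (cases "t = k")
    case False
    then have "Suc k - 1 - t = Suc (k - 1 - t)" and "t < k"
      using that by auto
    then show ?thesis
      using assms \<open>?\<sigma> \<in> child_signs\<close>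
      by (simp add: bit_Suc dyadic_cube_def dyadic_interval_def)
  qed (simp add: bit_0)
  then show "h \<in> dyadic_cube (Suc k) (\<lambda>l. 2 * m l + ?\<sigma> l)"
    unfolding dyadic_cube_def dyadic_interval_def by blast
qed

definition quasimeasure :: "(nat \<Rightarrow> ('d::finite \<Rightarrow> nat) \<Rightarrow> real) \<Rightarrow> bool" where
  "quasimeasure \<tau> \<longleftrightarrow> (\<forall>k m. (\<forall>l. m l < 2 ^ k) \<longrightarrow>
     \<tau> k m = (\<Sum>\<sigma>\<in>child_signs. \<tau> (Suc k) (\<lambda>l. 2 * m l + \<sigma> l)))"

lemma quasimeasureD:
  "quasimeasure \<tau> \<Longrightarrow> \<forall>l. m l < 2 ^ k \<Longrightarrow>
     \<tau> k m = (\<Sum>\<sigma>\<in>child_signs. \<tau> (Suc k) (\<lambda>l. 2 * m l + \<sigma> l))"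
  by (simp add: quasimeasure_def)

definition fw_coeff_rank :: "(nat \<Rightarrow> ('d::finite \<Rightarrow> nat) \<Rightarrow> real) \<Rightarrow> nat \<Rightarrow> ('d \<Rightarrow> nat) \<Rightarrow> real" where
  "fw_coeff_rank \<tau> k n = (\<Sum>m\<in>{m. \<forall>l. m l < 2 ^ k}. walsh_cube k n m * \<tau> k m)"

lemma fw_coeff_rank_Suc:
  assumes "quasimeasure \<tau>" and "\<forall>l. n l < 2 ^ k"
  shows "fw_coeff_rank \<tau> (Suc k) n = fw_coeff_rank \<tau> k n"
proof -
  have "fw_coeff_rank \<tau> (Suc k) n = (\<Sum>m\<in>{m. \<forall>l. m l < 2 ^ k}. \<Sum>\<sigma>\<in>child_signs.
      walsh_cube (Suc k) n (\<lambda>l. 2 * m l + \<sigma> l) * \<tau> (Suc k) (\<lambda>l. 2 * m l + \<sigma> l))"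
    unfolding fw_coeff_rank_def by (rule sum_cube_indices_Suc)
  also have "\<dots> = (\<Sum>m\<in>{m. \<forall>l. m l < 2 ^ k}.
      walsh_cube k n m * (\<Sum>\<sigma>\<in>child_signs. \<tau> (Suc k) (\<lambda>l. 2 * m l + \<sigma> l)))"
    using assms(2) by (simp add: walsh_cube_child sum_distrib_left)
  also have "\<dots> = fw_coeff_rank \<tau> k n"
    unfolding fw_coeff_rank_def by (intro sum.cong refl) (simp add: quasimeasureD[OF assms(1)])
  finally show ?thesis .
qed

lemma fw_coeff_rank_eq:
  assumes "quasimeasure \<tau>" and "\<forall>l. n l < 2 ^ k" and "k \<le> K"
  shows "fw_coeff_rank \<tau> K n = fw_coeff_rank \<tau> k n"
  using assms(3)
proof (induction K rule: dec_induct)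
  case (step j)
  have "\<forall>l. n l < 2 ^ j"
    using assms(2) step(1) by (meson order_less_le_trans one_le_numeral power_increasing)
  then show ?case
    using fw_coeff_rank_Suc[OF assms(1)] step.IH by simp
qed simp

lemma fw_coeff_eq_fw_coeff_rank:
  assumes "quasimeasure \<tau>" and "\<forall>l. n l \<le> K"
  shows "fw_coeff \<tau> n = fw_coeff_rank \<tau> K n"
proof -
  define k where "k = Max (range n)"
  have "n l \<le> k" for l
    by (simp add: k_def)
  then have "\<forall>l. n l < 2 ^ k"
    using less_exp le_less_trans by blast
  moreover have "k \<le> K"
    using assms(2) by (simp add: k_def)
  moreover have "fw_coeff \<tau> n = fw_coeff_rank \<tau> k n"
    unfolding fw_coeff_def fw_coeff_rank_def k_def Let_def ..
  ultimately show ?thesis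
    using fw_coeff_rank_eq[OF assms(1)] by metis
qed

lemma partial_sum_fw_coeff_eq_kernel_sum:
  fixes \<tau> :: "nat \<Rightarrow> ('d::finite \<Rightarrow> nat) \<Rightarrow> real"
  assumes "quasimeasure \<tau>" and "\<forall>l. N l \<le> K"
  shows "partial_sum (fw_coeff \<tau>) N g = (\<Sum>m\<in>{m. \<forall>l. m l < 2 ^ K}.
           \<tau> K m * (\<Sum>n\<in>{n. \<forall>l. n l < N l}. walsh_vec n (cube_point K m) * walsh_vec n g))"
proof -
  have "partial_sum (fw_coeff \<tau>) N g
      = (\<Sum>n\<in>{n. \<forall>l. n l < N l}. fw_coeff_rank \<tau> K n * walsh_vec n g)"
    unfolding partial_sum_def using assms
    by (intro sum.cong refl) (auto intro!: fw_coeff_eq_fw_coeff_rank less_imp_le_nat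
        intro: order.strict_trans2)
  also have "\<dots> = (\<Sum>n\<in>{n. \<forall>l. n l < N l}. \<Sum>m\<in>{m. \<forall>l. m l < 2 ^ K}.
      \<tau> K m * (walsh_vec n (cube_point K m) * walsh_vec n g))"
    unfolding fw_coeff_rank_def walsh_cube_def sum_distrib_right by (simp add: mult_ac)
  also have "\<dots> = (\<Sum>m\<in>{m. \<forall>l. m l < 2 ^ K}. \<Sum>n\<in>{n. \<forall>l. n l < N l}.
      \<tau> K m * (walsh_vec n (cube_point K m) * walsh_vec n g))"
    by (rule sum.swap)
  finally show ?thesis
    by (simp add: sum_distrib_left)
qed

lemma tauF_eq_0: "dyadic_cube k m \<inter> F = {} \<Longrightarrow> tauF F k m = 0"
  by (cases k) auto

lemma quasimeasure_tauF: "quasimeasure (tauF F)"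
  unfolding quasimeasure_def
proof (intro allI impI)
  fix k m
  define C where "C = {\<sigma> \<in> child_signs. dyadic_cube (Suc k) (\<lambda>l. 2 * m l + \<sigma> l) \<inter> F \<noteq> {}}"
  have "C \<subseteq> child_signs" and "finite C"
    using finite_child_signs by (auto simp: C_def)
  have "(\<Sum>\<sigma>\<in>child_signs. tauF F (Suc k) (\<lambda>l. 2 * m l + \<sigma> l))
      = (\<Sum>\<sigma>\<in>child_signs. if \<sigma> \<in> C then tauF F k m / card C else 0)"
    by (intro sum.cong refl) (simp add: child_signs_div2 C_def)
  also have "\<dots> = (\<Sum>\<sigma>\<in>C. tauF F k m / card C)"
    using \<open>C \<subseteq> child_signs\<close>
    by (simp only: sum.inter_restrict[OF finite_child_signs, symmetric] Int_absorb1)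
  also have "\<dots> = tauF F k m"
  proof (cases "C = {}")
    case True
    then have "dyadic_cube k m \<inter> F = {}"
      using dyadic_cube_children_cover by (fastforce simp: C_def)
    then show ?thesis
      using True by (simp add: tauF_eq_0)
  qed (use \<open>finite C\<close> in simp)
  finally show "tauF F k m = (\<Sum>\<sigma>\<in>child_signs. tauF F (Suc k) (\<lambda>l. 2 * m l + \<sigma> l))" ..
qed

lemma tauF_mult_walsh_kernel_eq_0:
  fixes F :: "('d::finite \<Rightarrow> dyadic) set"
  assumes "\<forall>h. (\<forall>l t. t < w \<longrightarrow> h l t = g l t) \<longrightarrow> h \<notin> F"
    and "w \<le> K" and "\<forall>l. 2 ^ w dvd N l"
  shows "tauF F K m * (\<Sum>n\<in>{n. \<forall>l. n l < N l}. walsh_vec n (cube_point K m) * walsh_vec n g) = 0"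
proof (cases "\<exists>l t. t < w \<and> cube_point K m l t \<noteq> g l t")
  case True
  then obtain l t where "t < w" and "cube_point K m l t \<noteq> g l t"
    by blast
  moreover have "2 ^ Suc t dvd N l"
    using \<open>t < w\<close> assms(3) by (meson Suc_leI dvd_trans le_imp_power_dvd)
  ultimately show ?thesis
    by (simp add: walsh_dirichlet_kernel_eq_0)
next
  case False
  have "h \<notin> F" if h: "h \<in> dyadic_cube K m" for h
  proof -
    have "h l t = g l t" if "t < w" for l t
    proof -
      have "h l t = cube_point K m l t"
        using dyadic_cube_digit[OF h] \<open>t < w\<close> assms(2) by simp
      then show ?thesis
        using False \<open>t < w\<close> by blast
    qed
    then show ?thesis
      using assms(1) by blast
  qed
  then have "dyadic_cube K m \<inter> F = {}"
    by blast
  then show ?thesis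
    by (simp add: tauF_eq_0)
qed

theorem corollary1:
  fixes F :: "('d::finite \<Rightarrow> dyadic) set" and g :: "'d \<Rightarrow> dyadic"
  assumes "CARD('d) \<ge> 2"
    and "F \<noteq> {}"
    and "closedin dyadic_topology F"
    and "g \<notin> F"
  shows "\<exists>w::nat. \<forall>M::'d \<Rightarrow> nat. (\<forall>l. M l \<ge> 1) \<longrightarrow>
           partial_sum (fw_coeff (tauF F)) (\<lambda>l. 2 ^ w * M l) g = 0"
proof -
  obtain w where w: "\<forall>h. (\<forall>l t. t < w \<longrightarrow> h l t = g l t) \<longrightarrow> h \<notin> F"
    using closedin_dyadic_topology_cylinder_disjoint[OF assms(3,4)] by blast
  have "partial_sum (fw_coeff (tauF F)) N g = 0" if N: "N = (\<lambda>l. 2 ^ w * M l)" for N M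
  proof -
    define K where "K = w + Max (range N)"
    have N_le_K: "\<forall>l. N l \<le> K"
      by (simp add: K_def trans_le_add2)
    have "\<forall>l. 2 ^ w dvd N l"
      by (simp add: N)
    then have "(\<Sum>m\<in>{m. \<forall>l. m l < 2 ^ K}. tauF F K m * (\<Sum>n\<in>{n. \<forall>l. n l < N l}.
        walsh_vec n (cube_point K m) * walsh_vec n g)) = 0"
      using tauF_mult_walsh_kernel_eq_0[OF w] by (intro sum.neutral) (simp add: K_def)
    then show ?thesis
      by (simp add: partial_sum_fw_coeff_eq_kernel_sum[OF quasimeasure_tauF N_le_K])
  qed
  then show ?thesis
    by blast
qed

end
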